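(* Let $M_0$ be an r-oriented two-sided associative cone in $\mathbb{R}^7$, written as $M_0=\{r\phi(\sigma):\sigma\in\Sigma,r\in\mathbb{R}\}$ for a real analytic map $\phi:\Sigma\to S^6$ from a Riemann surface $\Sigma$ (with the complex structure induced by $\phi^*g$ and the orientation making $\varphi(\phi,\partial_s\phi,\partial_t\phi)>0$ for positive coordinates). Let $w$ be a holomorphic vector field on $\Sigma$ and set $\psi=\mathcal{L}_w\phi:\Sigma\to\mathbb{R}^7$, the Lie derivative of $\phi$ along $w$. Then $M=\{r\phi(\sigma)+\psi(\sigma):\sigma\in\Sigma,r\in\mathbb{R}\}$ is an r-oriented ruled associative 3-fold in $\mathbb{R}^7$ with asymptotic cone $M_0$.
   Context: Let $(x_1,\dots,x_7)$ be coordinates on $\mathbb{R}^7$ with Euclidean metric $g$, $dx_{ijk}=dx_i\wedge dx_j\wedge dx_k$, and $\varphi=dx_{123}+dx_{145}+dx_{167}+dx_{246}-dx_{257}-dx_{347}-dx_{356}$. An oriented 3-dimensional (immersed) submanifold $N$ is associative if $\varphi|_{T_xN}=\mathrm{vol}_{T_xN}$ for all $x\in N$. A cone is a submanifold invariant under dilations, nonsingular except possibly at $0$; it is two-sided if $C=-C$. An r-oriented ruled submanifold is one of the form $\{r\phi(\sigma)+\psi(\sigma):\sigma\in\Sigma,r\in\mathbb{R}\}$ with $\phi:\Sigma\to S^6$, $\psi:\Sigma\to\mathbb{R}^7$, viewed as the union of the affine lines through $\psi(\sigma)$ with oriented unit direction $\phi(\sigma)$; its asymptotic cone is $\{r\phi(\sigma):\sigma\in\Sigma,r\in\mathbb{R}\}$.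 An r-oriented two-sided cone is an r-oriented ruled submanifold with $\psi\equiv0$. *)

theory Defs
  imports "HOL-Complex_Analysis.Complex_Analysis"
begin

definition dx3 :: "7 \<Rightarrow> 7 \<Rightarrow> 7 \<Rightarrow> real^7 \<Rightarrow> real^7 \<Rightarrow> real^7 \<Rightarrow> real" where
  "dx3 i j k u v w =
     u$i * (v$j * w$k - v$k * w$j)
   - v$i * (u$j * w$k - u$k * w$j)
   + w$i * (u$j * v$k - u$k * v$j)"

definition G2phi :: "real^7 \<Rightarrow> real^7 \<Rightarrow> real^7 \<Rightarrow> real" where
  "G2phi u v w = dx3 1 2 3 u v w + dx3 1 4 5 u v w + dx3 1 6 7 u v w + dx3 2 4 6 u v w
               - dx3 2 5 7 u v w - dx3 3 4 7 u v w - dx3 3 5 6 u v w"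

text \<open>Euclidean 3-volume of the parallelepiped spanned by u, v, w
  (square root of the Gram determinant), i.e. vol evaluated on (u,v,w).\<close>
definition vol3 :: "real^7 \<Rightarrow> real^7 \<Rightarrow> real^7 \<Rightarrow> real" where
  "vol3 u v w = sqrt (
      (u \<bullet> u) * ((v \<bullet> v) * (w \<bullet> w) - (v \<bullet> w) * (w \<bullet> v))
    - (u \<bullet> v) * ((v \<bullet> u) * (w \<bullet> w) - (v \<bullet> w) * (w \<bullet> u))
    + (u \<bullet> w) * ((v \<bullet> u) * (w \<bullet> v) - (v \<bullet> v) * (w \<bullet> u)))"

text \<open>A 3-parameter family F(r, s + i t) is associative (with the orientation given by
  the coordinate order (r, s, t)) on S: at each point F is differentiable and
  phi(F_r, F_s, F_t) = vol(F_r, F_s, F_t), i.e. phi restricted to the oriented tangent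
  space equals its volume form.\<close>
definition associative_param :: "(real \<times> complex \<Rightarrow> real^7) \<Rightarrow> (real \<times> complex) set \<Rightarrow> bool" where
  "associative_param F S \<longleftrightarrow>
     (\<forall>x\<in>S. F differentiable (at x) \<and>
        G2phi (frechet_derivative F (at x) (1, 0)) (frechet_derivative F (at x) (0, 1))
              (frechet_derivative F (at x) (0, \<i>))
      = vol3 (frechet_derivative F (at x) (1, 0)) (frechet_derivative F (at x) (0, 1))
              (frechet_derivative F (at x) (0, \<i>)))"

text \<open>Real analyticity of a map from an open subset of C = R^2 into R^7:
  locally the sum of a (unconditionally, equivalently absolutely) convergent
  double power series in s - s0, t - t0.\<close>
definition real_analytic_on :: "(complex \<Rightarrow> real^7) \<Rightarrow> complex set \<Rightarrow> bool" where
  "real_analytic_on f U \<longleftrightarrow>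
     (\<forall>p\<in>U. \<exists>e>0. \<exists>c :: nat \<Rightarrow> nat \<Rightarrow> real^7. \<forall>z\<in>ball p e.
        ((\<lambda>(i, j). ((Re z - Re p) ^ i * (Im z - Im p) ^ j) *\<^sub>R c i j) has_sum f z) UNIV)"

definition ruled_set :: "(complex \<Rightarrow> real^7) \<Rightarrow> (complex \<Rightarrow> real^7) \<Rightarrow> complex set \<Rightarrow> (real^7) set" where
  "ruled_set \<phi> \<psi> U = {r *\<^sub>R \<phi> \<sigma> + \<psi> \<sigma> | r \<sigma>. \<sigma> \<in> U}"

definition asymptotic_cone :: "(complex \<Rightarrow> real^7) \<Rightarrow> (complex \<Rightarrow> real^7) \<Rightarrow> complex set \<Rightarrow> (real^7) set" where
  "asymptotic_cone \<phi> \<psi> U = {r *\<^sub>R \<phi> \<sigma> | r \<sigma>. \<sigma> \<in> U}"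

text \<open>Lie derivative of a map phi along a vector field w (w(z) viewed as a tangent vector
  in R^2 = C): L_w phi = d phi (w).\<close>
definition lie_deriv :: "(complex \<Rightarrow> complex) \<Rightarrow> (complex \<Rightarrow> real^7) \<Rightarrow> complex \<Rightarrow> real^7" where
  "lie_deriv w \<phi> z = frechet_derivative \<phi> (at z) (w z)"

end

theory Submission
  imports Defs
begin

text \<open>
  A cone over \<open>\<phi> : \<Sigma> \<rightarrow> S\<^sup>6\<close> is associative exactly when \<open>\<phi>\<close> is a \<open>J\<close>-holomorphic curve: for a unit
  vector \<open>\<phi>\<close> with conformal derivative, equality \<open>\<phi>(\<phi>, \<phi>\<^sub>s, \<phi>\<^sub>t) = vol(\<phi>, \<phi>\<^sub>s, \<phi>\<^sub>t)\<close> in the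
  calibration inequality forces \<open>\<phi>\<^sub>t = \<phi> \<times> \<phi>\<^sub>s\<close>, with \<open>\<times>\<close> the G2 cross product. Real analyticity
  (termwise differentiation of the double power series) makes \<open>\<phi>\<close> twice differentiable with
  symmetric mixed partials, so this relation can be differentiated. Together with the
  Cauchy-Riemann equations for \<open>w\<close> it shows that the tangent vectors of
  \<open>F(r, \<sigma>) = r \<phi>(\<sigma>) + \<L>\<^sub>w\<phi>(\<sigma>)\<close> satisfy \<open>F\<^sub>r = \<phi>\<close> and \<open>F\<^sub>t = \<phi> \<times> F\<^sub>s + k \<phi>\<close> for a scalar \<open>k\<close>,
  and every frame \<open>(u, A, u \<times> A + k u)\<close> with \<open>|u| = 1\<close> is calibrated by \<open>\<phi>\<close>.
\<close>

lemma exhaust_7: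
  fixes x :: 7
  shows "x = 1 \<or> x = 2 \<or> x = 3 \<or> x = 4 \<or> x = 5 \<or> x = 6 \<or> x = 7"
proof (induct x)
  case (of_int z)
  then have "z = 0 \<or> z = 1 \<or> z = 2 \<or> z = 3 \<or> z = 4 \<or> z = 5 \<or> z = 6" by simp presburger
  then show ?case by auto
qed

lemma forall_7: "(\<forall>i::7. P i) \<longleftrightarrow> P 1 \<and> P 2 \<and> P 3 \<and> P 4 \<and> P 5 \<and> P 6 \<and> P 7"
  by (metis exhaust_7)

lemma UNIV_7: "UNIV = {1, 2, 3, 4, 5, 6, 7::7}"
  using exhaust_7 by auto

lemma sum_7: "sum f (UNIV::7 set) = f 1 + f 2 + f 3 + f 4 + f 5 + f 6 + f 7"
  unfolding UNIV_7 by (simp add: ac_simps)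

text \<open>The G2 cross product: the bilinear map with \<open>\<langle>u \<times> v, w\<rangle> = \<phi>(u, v, w)\<close>, see
  \<open>inner_cross7\<close>.\<close>
definition cross7 :: "real^7 \<Rightarrow> real^7 \<Rightarrow> real^7" where
  "cross7 u v = (\<chi> k.
     if k = 1 then vec_nth u 2 * vec_nth v 3 - vec_nth u 3 * vec_nth v 2 + vec_nth u 4 * vec_nth v 5
       - vec_nth u 5 * vec_nth v 4 + vec_nth u 6 * vec_nth v 7 - vec_nth u 7 * vec_nth v 6
     else if k = 2 then vec_nth u 3 * vec_nth v 1 - vec_nth u 1 * vec_nth v 3 + vec_nth u 4 * vec_nth v 6
       - vec_nth u 6 * vec_nth v 4 - vec_nth u 5 * vec_nth v 7 + vec_nth u 7 * vec_nth v 5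
     else if k = 3 then vec_nth u 1 * vec_nth v 2 - vec_nth u 2 * vec_nth v 1 - vec_nth u 4 * vec_nth v 7
       + vec_nth u 7 * vec_nth v 4 - vec_nth u 5 * vec_nth v 6 + vec_nth u 6 * vec_nth v 5
     else if k = 4 then vec_nth u 5 * vec_nth v 1 - vec_nth u 1 * vec_nth v 5 + vec_nth u 6 * vec_nth v 2
       - vec_nth u 2 * vec_nth v 6 - vec_nth u 7 * vec_nth v 3 + vec_nth u 3 * vec_nth v 7
     else if k = 5 then vec_nth u 1 * vec_nth v 4 - vec_nth u 4 * vec_nth v 1 - vec_nth u 7 * vec_nth v 2
       + vec_nth u 2 * vec_nth v 7 - vec_nth u 6 * vec_nth v 3 + vec_nth u 3 * vec_nth v 6
     else if k = 6 then vec_nth u 7 * vec_nth v 1 - vec_nth u 1 * vec_nth v 7 + vec_nth u 2 * vec_nth v 4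
       - vec_nth u 4 * vec_nth v 2 - vec_nth u 3 * vec_nth v 5 + vec_nth u 5 * vec_nth v 3
     else vec_nth u 1 * vec_nth v 6 - vec_nth u 6 * vec_nth v 1 - vec_nth u 2 * vec_nth v 5
       + vec_nth u 5 * vec_nth v 2 - vec_nth u 3 * vec_nth v 4 + vec_nth u 4 * vec_nth v 3)"

lemma cross7_nth:
  "vec_nth (cross7 u v) 1 =
    vec_nth u 2 * vec_nth v 3 - vec_nth u 3 * vec_nth v 2 + vec_nth u 4 * vec_nth v 5
    - vec_nth u 5 * vec_nth v 4 + vec_nth u 6 * vec_nth v 7 - vec_nth u 7 * vec_nth v 6"
  "vec_nth (cross7 u v) 2 =
    vec_nth u 3 * vec_nth v 1 - vec_nth u 1 * vec_nth v 3 + vec_nth u 4 * vec_nth v 6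
    - vec_nth u 6 * vec_nth v 4 - vec_nth u 5 * vec_nth v 7 + vec_nth u 7 * vec_nth v 5"
  "vec_nth (cross7 u v) 3 =
    vec_nth u 1 * vec_nth v 2 - vec_nth u 2 * vec_nth v 1 - vec_nth u 4 * vec_nth v 7
    + vec_nth u 7 * vec_nth v 4 - vec_nth u 5 * vec_nth v 6 + vec_nth u 6 * vec_nth v 5"
  "vec_nth (cross7 u v) 4 =
    vec_nth u 5 * vec_nth v 1 - vec_nth u 1 * vec_nth v 5 + vec_nth u 6 * vec_nth v 2
    - vec_nth u 2 * vec_nth v 6 - vec_nth u 7 * vec_nth v 3 + vec_nth u 3 * vec_nth v 7"
  "vec_nth (cross7 u v) 5 =
    vec_nth u 1 * vec_nth v 4 - vec_nth u 4 * vec_nth v 1 - vec_nth u 7 * vec_nth v 2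
    + vec_nth u 2 * vec_nth v 7 - vec_nth u 6 * vec_nth v 3 + vec_nth u 3 * vec_nth v 6"
  "vec_nth (cross7 u v) 6 =
    vec_nth u 7 * vec_nth v 1 - vec_nth u 1 * vec_nth v 7 + vec_nth u 2 * vec_nth v 4
    - vec_nth u 4 * vec_nth v 2 - vec_nth u 3 * vec_nth v 5 + vec_nth u 5 * vec_nth v 3"
  "vec_nth (cross7 u v) 7 =
    vec_nth u 1 * vec_nth v 6 - vec_nth u 6 * vec_nth v 1 - vec_nth u 2 * vec_nth v 5
    + vec_nth u 5 * vec_nth v 2 - vec_nth u 3 * vec_nth v 4 + vec_nth u 4 * vec_nth v 3"
  by (simp_all add: cross7_def)

lemmas cross7_simps = cross7_nth inner_vec_def sum_7 vec_eq_iff forall_7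

lemma inner_cross7: "cross7 u v \<bullet> w = G2phi u v w"
  unfolding G2phi_def dx3_def by (simp add: cross7_simps) algebra

lemma cross7_skew: "cross7 u v = - cross7 v u"
  by (simp add: cross7_simps)

lemma cross7_refl [simp]: "cross7 u u = 0"
  by (simp add: cross7_simps)

lemma inner_cross7_self: "cross7 u v \<bullet> u = 0" "cross7 u v \<bullet> v = 0"
  by (simp_all add: cross7_simps) algebra+

lemma cross7_cross7: "cross7 u (cross7 u v) = (u \<bullet> v) *\<^sub>R u - (u \<bullet> u) *\<^sub>R v"
  by (simp add: cross7_simps algebra_simps)

lemma bilinear_cross7: "bilinear cross7"
  unfolding bilinear_def linear_iff by (simp add: cross7_simps algebra_simps)

lemma bounded_bilinear_cross7: "bounded_bilinear cross7"
  using bilinear_cross7 by (simp add: bilinear_conv_bounded_bilinear)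

lemmas cross7_add_right = bounded_bilinear.add_right[OF bounded_bilinear_cross7]
lemmas cross7_scaleR_right = bounded_bilinear.scaleR_right[OF bounded_bilinear_cross7]

lemma inner_cross7_swap: "cross7 u v \<bullet> w = - (cross7 u w \<bullet> v)"
  by (simp add: cross7_simps) algebra

lemma norm_cross7_sq: "cross7 u v \<bullet> cross7 u v = (u \<bullet> u) * (v \<bullet> v) - (u \<bullet> v)\<^sup>2"
  by (simp add: inner_cross7_swap[of u v] cross7_cross7 inner_diff_left inner_commute[of v u]
      power2_eq_square)

lemma cross7_cross7_unit:
  assumes "u \<bullet> u = 1" and "u \<bullet> v = 0"
  shows "cross7 u (cross7 u v) = - v"
  using assms by (simp add: cross7_cross7)

lemma cross7_cross7_self_right:
  assumes "u \<bullet> v = 0"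
  shows "cross7 (cross7 u v) v = - (v \<bullet> v) *\<^sub>R u"
proof -
  have "cross7 (cross7 u v) v = cross7 v (cross7 v u)"
    by (simp add: cross7_simps algebra_simps)
  then show ?thesis
    using assms by (simp add: cross7_cross7 inner_commute)
qed

lemma calibrated_frame_eq_cross7:
  assumes uu: "u \<bullet> u = 1" and uS: "u \<bullet> S = 0" and uT: "u \<bullet> T = 0" and ST: "S \<bullet> T = 0"
    and norm_eq: "norm S = norm T" and calibrated: "G2phi u S T = vol3 u S T"
  shows "T = cross7 u S"
proof -
  have TT: "T \<bullet> T = S \<bullet> S"
    using norm_eq by (metis power2_norm_eq_inner)
  have "vol3 u S T = sqrt ((S \<bullet> S) * (S \<bullet> S))"
    using uu uS uT ST TT by (simp add: vol3_def inner_commute)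
  then have "cross7 u S \<bullet> T = S \<bullet> S"
    using calibrated by (simp add: inner_cross7)
  moreover have "cross7 u S \<bullet> cross7 u S = S \<bullet> S"
    using uu uS by (simp add: norm_cross7_sq)
  ultimately have "(cross7 u S - T) \<bullet> (cross7 u S - T) = 0"
    using TT by (simp add: inner_diff_left inner_diff_right inner_commute[of T "cross7 u S"])
  then show ?thesis
    by simp
qed

lemma G2phi_cross7_eq_vol3:
  assumes uu: "u \<bullet> u = 1"
  shows "G2phi u A (cross7 u A + k *\<^sub>R u) = vol3 u A (cross7 u A + k *\<^sub>R u)"
proof -
  define B where "B = cross7 u A + k *\<^sub>R u"
  define p where "p = u \<bullet> A"
  define m where "m = A \<bullet> A - p\<^sup>2"
  have AxA: "cross7 u A \<bullet> cross7 u A = m"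
    using uu by (simp add: norm_cross7_sq m_def p_def)
  then have "m \<ge> 0"
    by (metis inner_ge_zero)
  have uB: "u \<bullet> B = k" and AB: "A \<bullet> B = k * p" and BB: "B \<bullet> B = m + k\<^sup>2"
    using uu AxA inner_cross7_self[of u A]
    by (simp_all add: B_def p_def inner_add_right inner_add_left inner_commute power2_eq_square)
  have "G2phi u A B = m"
    using AxA inner_cross7_self(1)[of u A] by (simp add: B_def inner_add_right flip: inner_cross7)
  moreover have "vol3 u A B = sqrt (m\<^sup>2)"
  proof -
    have "vol3 u A B = sqrt ((m + p\<^sup>2) * (m + k\<^sup>2) - (k * p) * (k * p)
        - p * (p * (m + k\<^sup>2) - (k * p) * k) + k * (p * (k * p) - (m + p\<^sup>2) * k))"
      unfolding vol3_def using uu uB AB BB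
      by (simp add: inner_commute[of B u] inner_commute[of B A] inner_commute[of A u] p_def m_def)
    also have "\<dots> = sqrt (m\<^sup>2)"
      by (simp add: algebra_simps power2_eq_square)
    finally show ?thesis .
  qed
  ultimately show ?thesis
    using \<open>m \<ge> 0\<close> by (simp add: B_def)
qed

lemma has_sum_imp_bounded_terms:
  fixes g :: "nat \<times> nat \<Rightarrow> 'a::real_normed_vector"
  assumes "(g has_sum s) UNIV"
  shows "\<exists>B. \<forall>k. norm (g k) \<le> B"
proof -
  have "((g \<circ> prod_decode) has_sum s) UNIV"
    using assms has_sum_reindex[OF inj_prod_decode, where g=g and x=s and A=UNIV]
    by (simp add: surj_prod_decode)
  then have "(g \<circ> prod_decode) \<longlonglongrightarrow> 0"
    by (intro summable_LIMSEQ_zero sums_summable[OF has_sum_imp_sums])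
  then obtain B where "\<And>n. norm ((g \<circ> prod_decode) n) \<le> B"
    by (metis BseqE convergentI convergent_imp_Bseq)
  then show ?thesis
    by (metis comp_apply prod_encode_inverse)
qed

lemma has_sum_reindex_vanishing:
  assumes "inj h" and "\<forall>k. k \<notin> range h \<longrightarrow> g k = 0"
  shows "(g has_sum s) UNIV \<longleftrightarrow> ((g \<circ> h) has_sum s) UNIV"
proof -
  have "(g has_sum s) UNIV \<longleftrightarrow> (g has_sum s) (range h)"
    using assms(2) by (intro has_sum_cong_neutral) auto
  also have "\<dots> \<longleftrightarrow> ((g \<circ> h) has_sum s) UNIV"
    using assms(1) by (rule has_sum_reindex)
  finally show ?thesis .
qed

lemma has_sum_shift_fst:
  fixes g :: "nat \<times> nat \<Rightarrow> 'a::{comm_monoid_add, topological_space}"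
  assumes "\<And>j. g (0, j) = 0"
  shows "(g has_sum s) UNIV \<longleftrightarrow> ((\<lambda>(i, j). g (Suc i, j)) has_sum s) UNIV"
proof -
  have "inj (map_prod Suc (id :: nat \<Rightarrow> nat))"
    by (auto simp: inj_on_def)
  moreover have "\<forall>k. k \<notin> range (map_prod Suc id) \<longrightarrow> g k = 0"
  proof (intro allI impI)
    fix k :: "nat \<times> nat"
    assume "k \<notin> range (map_prod Suc id)"
    then show "g k = 0"
      using assms by (cases k) (metis id_apply map_prod_simp not0_implies_Suc rangeI)
  qed
  ultimately have "(g has_sum s) UNIV \<longleftrightarrow> ((g \<circ> map_prod Suc id) has_sum s) UNIV"
    by (rule has_sum_reindex_vanishing)
  moreover have "g \<circ> map_prod Suc id = (\<lambda>(i, j). g (Suc i, j))"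
    by (auto simp: fun_eq_iff)
  ultimately show ?thesis
    by simp
qed

lemma has_sum_shift_snd:
  fixes g :: "nat \<times> nat \<Rightarrow> 'a::{comm_monoid_add, topological_space}"
  assumes "\<And>i. g (i, 0) = 0"
  shows "(g has_sum s) UNIV \<longleftrightarrow> ((\<lambda>(i, j). g (i, Suc j)) has_sum s) UNIV"
proof -
  have "inj (map_prod (id :: nat \<Rightarrow> nat) Suc)"
    by (auto simp: inj_on_def)
  moreover have "\<forall>k. k \<notin> range (map_prod id Suc) \<longrightarrow> g k = 0"
  proof (intro allI impI)
    fix k :: "nat \<times> nat"
    assume "k \<notin> range (map_prod id Suc)"
    then show "g k = 0"
      using assms by (cases k) (metis id_apply map_prod_simp not0_implies_Suc rangeI)
  qed
  ultimately have "(g has_sum s) UNIV \<longleftrightarrow> ((g \<circ> map_prod id Suc) has_sum s) UNIV"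
    by (rule has_sum_reindex_vanishing)
  moreover have "g \<circ> map_prod id Suc = (\<lambda>(i, j). g (i, Suc j))"
    by (auto simp: fun_eq_iff)
  ultimately show ?thesis
    by simp
qed

lemma filterlim_squares:
  "filterlim (\<lambda>n. {..<n} \<times> {..<n}) (finite_subsets_at_top (UNIV :: (nat \<times> nat) set)) sequentially"
  unfolding filterlim_finite_subsets_at_top
proof (intro allI impI)
  fix X :: "(nat \<times> nat) set"
  assume "finite X \<and> X \<subseteq> UNIV"
  then obtain N where "fst ` X \<union> snd ` X \<subseteq> {..<N}"
    using finite_nat_bounded by (metis finite_Un finite_imageI)
  then have "X \<subseteq> {..<n} \<times> {..<n}" if "N \<le> n" for n
    using that by force
  then show "\<forall>\<^sub>F n in sequentially. finite ({..<n} \<times> {..<n}) \<and> X \<subseteq> {..<n} \<times> {..<n}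
      \<and> {..<n} \<times> {..<n} \<subseteq> UNIV"
    unfolding eventually_sequentially by blast
qed

lemma summable_on_product_nonneg:
  fixes a b :: "nat \<Rightarrow> real"
  assumes "summable a" "summable b" "\<And>i. a i \<ge> 0" "\<And>j. b j \<ge> 0"
  shows "(\<lambda>(i, j). a i * b j) summable_on UNIV"
proof -
  have b: "(b has_sum suminf b) UNIV"
    using assms by (intro sums_nonneg_imp_has_sum) (simp_all add: summable_sums)
  have "(\<lambda>(i, j). a i * b j) summable_on Sigma UNIV (\<lambda>_. UNIV)"
  proof (rule summable_on_SigmaI)
    show "((\<lambda>j. (\<lambda>(i, j). a i * b j) (i, j)) has_sum a i * suminf b) UNIV" for i
      using has_sum_cmult_right[OF b, of "a i"] by simp
    show "(\<lambda>i. a i * suminf b) summable_on UNIV"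
      using assms
      by (intro summable_nonneg_imp_summable_on summable_mult2 mult_nonneg_nonneg suminf_nonneg) auto
  qed (use assms in auto)
  then show ?thesis
    by simp
qed

lemma summable_real_mult_power:
  fixes q :: real
  assumes "0 \<le> q" "q < 1"
  shows "summable (\<lambda>n. real n * q ^ (n - 1))"
proof -
  have "summable (\<lambda>n. diffs (\<lambda>_. 1::real) n * q ^ n)"
  proof (rule termdiff_converges[where K = 1])
    show "norm q < 1"
      using assms by simp
    show "summable (\<lambda>n. 1 * x ^ n)" if "norm x < 1" for x :: real
      using that by (simp add: summable_geometric)
  qed
  then have "summable (\<lambda>n. real (Suc n) * q ^ n)"
    by (simp add: diffs_def)
  then show ?thesis
    by (subst summable_Suc_iff [symmetric]) simp
qed

lemma uniform_limit_squares:
  fixes F :: "nat \<times> nat \<Rightarrow> 'b \<Rightarrow> 'a::banach"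
  assumes "M summable_on UNIV" and "\<And>k \<zeta>. \<zeta> \<in> S \<Longrightarrow> norm (F k \<zeta>) \<le> M k"
  shows "uniform_limit S (\<lambda>n \<zeta>. \<Sum>k\<in>{..<n} \<times> {..<n}. F k \<zeta>) (\<lambda>\<zeta>. infsum (\<lambda>k. F k \<zeta>) UNIV) sequentially"
proof -
  have "uniform_limit S (\<lambda>X \<zeta>. \<Sum>k\<in>X. F k \<zeta>) (\<lambda>\<zeta>. infsum (\<lambda>k. F k \<zeta>) UNIV) (finite_subsets_at_top UNIV)"
    using assms by (intro Weierstrass_m_test_general) auto
  from filterlim_compose[OF this filterlim_squares] show ?thesis
    by simp
qed

lemma uniform_limit_imp_partials_close:
  fixes Fx Fy :: "nat \<Rightarrow> 'b \<Rightarrow> 'a::real_normed_vector"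
  assumes "uniform_limit S Fx Gx sequentially" and "uniform_limit S Fy Gy sequentially" and "e > 0"
  shows "\<forall>\<^sub>F n in sequentially. \<forall>\<zeta>\<in>S. \<forall>h :: complex.
    norm ((Re h *\<^sub>R Fx n \<zeta> + Im h *\<^sub>R Fy n \<zeta>) - (Re h *\<^sub>R Gx \<zeta> + Im h *\<^sub>R Gy \<zeta>)) \<le> e * norm h"
proof -
  have "e / 2 > 0"
    using assms(3) by simp
  from uniform_limitD[OF assms(1) this] uniform_limitD[OF assms(2) this]
  show ?thesis
  proof eventually_elim
    case (elim n)
    show ?case
    proof (intro ballI allI)
      fix \<zeta> and h :: complex
      assume "\<zeta> \<in> S"
      have "norm ((Re h *\<^sub>R Fx n \<zeta> + Im h *\<^sub>R Fy n \<zeta>) - (Re h *\<^sub>R Gx \<zeta> + Im h *\<^sub>R Gy \<zeta>))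
          = norm (Re h *\<^sub>R (Fx n \<zeta> - Gx \<zeta>) + Im h *\<^sub>R (Fy n \<zeta> - Gy \<zeta>))"
        by (simp add: algebra_simps)
      also have "\<dots> \<le> \<bar>Re h\<bar> * norm (Fx n \<zeta> - Gx \<zeta>) + \<bar>Im h\<bar> * norm (Fy n \<zeta> - Gy \<zeta>)"
        by (rule order_trans[OF norm_triangle_ineq]) simp
      also have "\<dots> \<le> norm h * (e / 2) + norm h * (e / 2)"
        using elim \<open>\<zeta> \<in> S\<close> abs_Re_le_cmod[of h] abs_Im_le_cmod[of h]
        by (intro add_mono mult_mono) (auto simp: dist_norm)
      finally show "norm ((Re h *\<^sub>R Fx n \<zeta> + Im h *\<^sub>R Fy n \<zeta>) - (Re h *\<^sub>R Gx \<zeta> + Im h *\<^sub>R Gy \<zeta>))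
          \<le> e * norm h"
        by simp
    qed
  qed
qed

lemma has_derivative_infsum_partials:
  fixes f fx fy :: "nat \<times> nat \<Rightarrow> complex \<Rightarrow> 'a::banach"
  assumes S: "convex S" "open S" "z \<in> S"
    and deriv: "\<And>k \<zeta>. \<zeta> \<in> S \<Longrightarrow> (f k has_derivative (\<lambda>h. Re h *\<^sub>R fx k \<zeta> + Im h *\<^sub>R fy k \<zeta>)) (at \<zeta>)"
    and bound: "\<And>k \<zeta>. \<zeta> \<in> S \<Longrightarrow> norm (fx k \<zeta>) \<le> M k" "\<And>k \<zeta>. \<zeta> \<in> S \<Longrightarrow> norm (fy k \<zeta>) \<le> M k"
    and M: "M summable_on UNIV"
    and sum: "\<And>\<zeta>. \<zeta> \<in> S \<Longrightarrow> ((\<lambda>k. f k \<zeta>) has_sum g \<zeta>) UNIV"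
  shows "(g has_derivative
    (\<lambda>h. Re h *\<^sub>R infsum (\<lambda>k. fx k z) UNIV + Im h *\<^sub>R infsum (\<lambda>k. fy k z) UNIV)) (at z)"
proof -
  define sq :: "nat \<Rightarrow> (nat \<times> nat) set" where "sq n = {..<n} \<times> {..<n}" for n
  define g' where
    "g' \<zeta> h = Re h *\<^sub>R infsum (\<lambda>k. fx k \<zeta>) UNIV + Im h *\<^sub>R infsum (\<lambda>k. fy k \<zeta>) UNIV" for \<zeta> h
  have partial_sums: "((\<lambda>\<zeta>. \<Sum>k\<in>sq n. f k \<zeta>) has_derivative
      (\<lambda>h. Re h *\<^sub>R (\<Sum>k\<in>sq n. fx k \<zeta>) + Im h *\<^sub>R (\<Sum>k\<in>sq n. fy k \<zeta>))) (at \<zeta> within S)"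
    if "\<zeta> \<in> S" for n \<zeta>
  proof -
    have "((\<lambda>\<zeta>. \<Sum>k\<in>sq n. f k \<zeta>) has_derivative
        (\<lambda>h. \<Sum>k\<in>sq n. Re h *\<^sub>R fx k \<zeta> + Im h *\<^sub>R fy k \<zeta>)) (at \<zeta> within S)"
      using has_derivative_at_withinI[OF deriv[OF that]] by (rule has_derivative_sum)
    then show ?thesis
      by (rule has_derivative_eq_rhs) (simp add: fun_eq_iff sum.distrib scaleR_sum_right)
  qed
  have "uniform_limit S (\<lambda>n \<zeta>. \<Sum>k\<in>sq n. fx k \<zeta>) (\<lambda>\<zeta>. infsum (\<lambda>k. fx k \<zeta>) UNIV) sequentially"
    and "uniform_limit S (\<lambda>n \<zeta>. \<Sum>k\<in>sq n. fy k \<zeta>) (\<lambda>\<zeta>. infsum (\<lambda>k. fy k \<zeta>) UNIV) sequentially"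
    unfolding sq_def using bound by (auto intro!: uniform_limit_squares M)
  then have close: "\<forall>\<^sub>F n in sequentially. \<forall>\<zeta>\<in>S. \<forall>h.
      norm ((Re h *\<^sub>R (\<Sum>k\<in>sq n. fx k \<zeta>) + Im h *\<^sub>R (\<Sum>k\<in>sq n. fy k \<zeta>)) - g' \<zeta> h) \<le> e * norm h"
    if "e > 0" for e
    unfolding g'_def using that by (rule uniform_limit_imp_partials_close)
  have lim: "(\<lambda>n. \<Sum>k\<in>sq n. f k \<zeta>) \<longlonglongrightarrow> g \<zeta>" if "\<zeta> \<in> S" for \<zeta>
    using filterlim_compose[OF sum[OF that, unfolded has_sum_def] filterlim_squares]
    by (simp add: sq_def)
  obtain G where G: "\<And>\<zeta>. \<zeta> \<in> S \<Longrightarrow> (\<lambda>n. \<Sum>k\<in>sq n. f k \<zeta>) \<longlonglongrightarrow> G \<zeta> \<and> (G has_derivative g' \<zeta>) (at \<zeta> within S)"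
    using has_derivative_sequence[OF S(1) partial_sums close S(3) lim[OF S(3)]] by blast
  have "G \<zeta> = g \<zeta>" if "\<zeta> \<in> S" for \<zeta>
    using G[OF that] lim[OF that] by (blast intro: LIMSEQ_unique)
  moreover have "(G has_derivative g' z) (at z)"
    using G[OF S(3)] at_within_open[OF S(3,2)] by simp
  ultimately have "(g has_derivative g' z) (at z)"
    using has_derivative_transform_within_open[OF _ S(2,3)] by metis
  then show ?thesis
    by (simp add: g'_def[abs_def])
qed

definition dps_term ::
    "(nat \<Rightarrow> nat \<Rightarrow> 'a::real_normed_vector) \<Rightarrow> complex \<Rightarrow> complex \<Rightarrow> nat \<times> nat \<Rightarrow> 'a"
  where "dps_term c p z = (\<lambda>(i, j). ((Re z - Re p) ^ i * (Im z - Im p) ^ j) *\<^sub>R c i j)"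

definition dps :: "(nat \<Rightarrow> nat \<Rightarrow> 'a::real_normed_vector) \<Rightarrow> complex \<Rightarrow> complex \<Rightarrow> 'a"
  where "dps c p z = infsum (dps_term c p z) UNIV"

definition coeff_dx :: "(nat \<Rightarrow> nat \<Rightarrow> 'a::real_normed_vector) \<Rightarrow> nat \<Rightarrow> nat \<Rightarrow> 'a"
  where "coeff_dx c i j = real (Suc i) *\<^sub>R c (Suc i) j"

definition coeff_dy :: "(nat \<Rightarrow> nat \<Rightarrow> 'a::real_normed_vector) \<Rightarrow> nat \<Rightarrow> nat \<Rightarrow> 'a"
  where "coeff_dy c i j = real (Suc j) *\<^sub>R c i (Suc j)"

definition dps_dx_term ::
    "(nat \<Rightarrow> nat \<Rightarrow> 'a::real_normed_vector) \<Rightarrow> complex \<Rightarrow> complex \<Rightarrow> nat \<times> nat \<Rightarrow> 'a"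
  where "dps_dx_term c p z =
    (\<lambda>(i, j). (real i * (Re z - Re p) ^ (i - 1) * (Im z - Im p) ^ j) *\<^sub>R c i j)"

definition dps_dy_term ::
    "(nat \<Rightarrow> nat \<Rightarrow> 'a::real_normed_vector) \<Rightarrow> complex \<Rightarrow> complex \<Rightarrow> nat \<times> nat \<Rightarrow> 'a"
  where "dps_dy_term c p z =
    (\<lambda>(i, j). (real j * (Re z - Re p) ^ i * (Im z - Im p) ^ (j - 1)) *\<^sub>R c i j)"

definition dps_majorant :: "nat \<times> nat \<Rightarrow> real"
  where "dps_majorant =
    (\<lambda>(i, j). real i * (1/2) ^ (i - 1) * (1/2) ^ j + real j * (1/2) ^ (j - 1) * (1/2) ^ i)"

lemma coeff_dx_dy_commute: "coeff_dx (coeff_dy c) = coeff_dy (coeff_dx c)"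
  by (intro ext) (simp add: coeff_dx_def coeff_dy_def)

lemma has_derivative_dps_term:
  "((\<lambda>z. dps_term c p z k) has_derivative
    (\<lambda>h. Re h *\<^sub>R dps_dx_term c p z k + Im h *\<^sub>R dps_dy_term c p z k)) (at z)"
proof (cases k)
  case (Pair i j)
  have x: "((\<lambda>z. Re z - Re p) has_derivative Re) (at z)"
    and y: "((\<lambda>z. Im z - Im p) has_derivative Im) (at z)"
    by (auto intro!: derivative_eq_intros)
  have "((\<lambda>z. (Re z - Re p) ^ i * (Im z - Im p) ^ j) has_derivative
     (\<lambda>h. (Re z - Re p) ^ i * (of_nat j * Im h * (Im z - Im p) ^ (j - 1))
        + of_nat i * Re h * (Re z - Re p) ^ (i - 1) * (Im z - Im p) ^ j)) (at z)"
    by (rule has_derivative_mult[OF has_derivative_power[OF x] has_derivative_power[OF y]])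
  from has_derivative_scaleR_left[OF this, of "c i j"] show ?thesis
    unfolding Pair dps_term_def dps_dx_term_def dps_dy_term_def case_prod_conv
    by (rule has_derivative_eq_rhs) (simp add: fun_eq_iff algebra_simps scaleR_add_left)
qed

lemma has_sum_dps_dx_term_iff:
  "(dps_dx_term c p z has_sum s) UNIV \<longleftrightarrow> (dps_term (coeff_dx c) p z has_sum s) UNIV"
proof -
  have shift: "(\<lambda>(i, j). dps_dx_term c p z (Suc i, j)) = dps_term (coeff_dx c) p z"
    by (auto simp: fun_eq_iff dps_term_def coeff_dx_def dps_dx_term_def mult_ac)
  have "(dps_dx_term c p z has_sum s) UNIV \<longleftrightarrow> ((\<lambda>(i, j). dps_dx_term c p z (Suc i, j)) has_sum s) UNIV"
    by (rule has_sum_shift_fst) (simp add: dps_dx_term_def)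
  then show ?thesis
    by (simp only: shift)
qed

lemma has_sum_dps_dy_term_iff:
  "(dps_dy_term c p z has_sum s) UNIV \<longleftrightarrow> (dps_term (coeff_dy c) p z has_sum s) UNIV"
proof -
  have shift: "(\<lambda>(i, j). dps_dy_term c p z (i, Suc j)) = dps_term (coeff_dy c) p z"
    by (auto simp: fun_eq_iff dps_term_def coeff_dy_def dps_dy_term_def mult_ac)
  have "(dps_dy_term c p z has_sum s) UNIV \<longleftrightarrow> ((\<lambda>(i, j). dps_dy_term c p z (i, Suc j)) has_sum s) UNIV"
    by (rule has_sum_shift_snd) (simp add: dps_dy_term_def)
  then show ?thesis
    by (simp only: shift)
qed

lemma norm_deriv_term_le:
  fixes v :: "'a::real_normed_vector"
  assumes v: "norm v * \<rho> ^ (i + j) \<le> B" and "\<rho> > 0"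
    and a: "\<bar>a\<bar> \<le> \<rho> / 2" and b: "\<bar>b\<bar> \<le> \<rho> / 2"
  shows "norm ((real i * a ^ (i - 1) * b ^ j) *\<^sub>R v) \<le> B / \<rho> * (real i * (1/2) ^ (i - 1) * (1/2) ^ j)"
proof (cases i)
  case 0
  then show ?thesis by simp
next
  case (Suc m)
  have "norm ((real i * a ^ (i - 1) * b ^ j) *\<^sub>R v) = real i * (\<bar>a\<bar> ^ m * \<bar>b\<bar> ^ j * norm v)"
    by (simp add: Suc abs_mult power_abs)
  also have "\<dots> \<le> real i * ((\<rho> / 2) ^ m * (\<rho> / 2) ^ j * norm v)"
    using a b by (intro mult_left_mono mult_right_mono mult_mono power_mono) auto
  also have "\<dots> = real i * (1/2) ^ m * (1/2) ^ j * (norm v * \<rho> ^ (i + j) / \<rho>)"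
    using \<open>\<rho> > 0\<close> by (simp add: Suc power_divide power_add)
  also have "\<dots> \<le> real i * (1/2) ^ m * (1/2) ^ j * (B / \<rho>)"
    using v \<open>\<rho> > 0\<close> by (intro mult_left_mono divide_right_mono) auto
  finally show ?thesis
    by (simp add: Suc ac_simps)
qed

lemma summable_on_dps_majorant: "dps_majorant summable_on UNIV"
proof -
  define a :: "nat \<Rightarrow> real" where "a n = real n * (1/2) ^ (n - 1)" for n
  define g :: "nat \<Rightarrow> real" where "g n = (1/2) ^ n" for n
  have "summable a"
    unfolding a_def by (rule summable_real_mult_power) auto
  moreover have "summable g"
    unfolding g_def by (rule summable_geometric) simp
  moreover have "0 \<le> a n" "0 \<le> g n" for n
    by (simp_all add: a_def g_def)
  ultimately have "(\<lambda>k. (case k of (i, j) \<Rightarrow> a i * g j) + (case k of (i, j) \<Rightarrow> g i * a j)) summable_on UNIV"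
    by (intro summable_on_add summable_on_product_nonneg)
  then show ?thesis
    by (simp add: dps_majorant_def a_def g_def case_prod_beta' mult_ac)
qed

lemma norm_dps_deriv_terms_le:
  assumes "\<rho> > 0" and B: "\<And>i j. norm (c i j) * \<rho> ^ (i + j) \<le> B" and z: "z \<in> ball p (\<rho> / 2)"
  shows "norm (dps_dx_term c p z k) \<le> B / \<rho> * dps_majorant k"
    and "norm (dps_dy_term c p z k) \<le> B / \<rho> * dps_majorant k"
proof -
  obtain i j where k: "k = (i, j)"
    by fastforce
  have "norm (c 0 0) \<le> B"
    using B[of 0 0] by simp
  then have "B \<ge> 0"
    by (metis norm_ge_zero order_trans)
  have "cmod (z - p) < \<rho> / 2"
    using z by (simp add: dist_norm norm_minus_commute)
  then have x: "\<bar>Re z - Re p\<bar> \<le> \<rho> / 2" and y: "\<bar>Im z - Im p\<bar> \<le> \<rho> / 2"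
    using abs_Re_le_cmod[of "z - p"] abs_Im_le_cmod[of "z - p"] by auto
  have "norm (dps_dx_term c p z k) \<le> B / \<rho> * (real i * (1/2) ^ (i - 1) * (1/2) ^ j)"
    using norm_deriv_term_le[OF B \<open>\<rho> > 0\<close> x y] by (simp add: dps_dx_term_def k)
  moreover have "norm (dps_dy_term c p z k) \<le> B / \<rho> * (real j * (1/2) ^ (j - 1) * (1/2) ^ i)"
    using norm_deriv_term_le[of "c i j" \<rho> j i B, OF _ \<open>\<rho> > 0\<close> y x] B[of i j]
    by (simp add: dps_dy_term_def k add.commute mult_ac)
  moreover have "0 \<le> B / \<rho> * (real i * (1/2) ^ (i - 1) * (1/2) ^ j)"
    and "0 \<le> B / \<rho> * (real j * (1/2) ^ (j - 1) * (1/2) ^ i)"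
    using \<open>B \<ge> 0\<close> \<open>\<rho> > 0\<close> by simp_all
  ultimately show "norm (dps_dx_term c p z k) \<le> B / \<rho> * dps_majorant k"
    and "norm (dps_dy_term c p z k) \<le> B / \<rho> * dps_majorant k"
    by (simp_all add: dps_majorant_def k distrib_left)
qed

lemma dps_coeffs_bounded:
  assumes "r > 0" and conv: "\<forall>\<zeta>\<in>ball p r. (dps_term c p \<zeta> has_sum f \<zeta>) UNIV"
  obtains B where "\<And>i j. norm (c i j) * (r / 2) ^ (i + j) \<le> B"
proof -
  define \<rho> where "\<rho> = r / 2"
  have "\<rho> > 0"
    using \<open>r > 0\<close> by (simp add: \<rho>_def)
  have "cmod (Complex \<rho> \<rho>) = sqrt (2 * \<rho>\<^sup>2)"
    by (simp add: cmod_def power2_eq_square)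
  also have "\<dots> < sqrt ((2 * \<rho>)\<^sup>2)"
    using \<open>\<rho> > 0\<close> by (simp add: power2_eq_square)
  also have "\<dots> = r"
    using \<open>r > 0\<close> by (simp add: \<rho>_def)
  finally have "p + Complex \<rho> \<rho> \<in> ball p r"
    by (simp add: dist_norm)
  then obtain B where "\<forall>k. norm (dps_term c p (p + Complex \<rho> \<rho>) k) \<le> B"
    using has_sum_imp_bounded_terms conv by blast
  then have "norm (c i j) * \<rho> ^ (i + j) \<le> B" for i j
    using \<open>r > 0\<close> spec[of _ "(i, j)"]
    by (simp add: \<rho>_def dps_term_def power_add abs_mult power_abs mult.commute)
  then show ?thesis
    unfolding \<rho>_def by (rule that)
qed

lemma has_derivative_dps:
  fixes c :: "nat \<Rightarrow> nat \<Rightarrow> 'a::banach"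
  assumes "r > 0" and conv: "\<forall>\<zeta>\<in>ball p r. (dps_term c p \<zeta> has_sum f \<zeta>) UNIV"
    and z: "z \<in> ball p (r / 4)"
  shows "(dps_term (coeff_dx c) p z has_sum dps (coeff_dx c) p z) UNIV"
    and "(dps_term (coeff_dy c) p z has_sum dps (coeff_dy c) p z) UNIV"
    and "(f has_derivative (\<lambda>h. Re h *\<^sub>R dps (coeff_dx c) p z + Im h *\<^sub>R dps (coeff_dy c) p z)) (at z)"
proof -
  define \<rho> where "\<rho> = r / 2"
  have "\<rho> > 0"
    using \<open>r > 0\<close> by (simp add: \<rho>_def)
  obtain B where B: "\<And>i j. norm (c i j) * \<rho> ^ (i + j) \<le> B"
    using dps_coeffs_bounded[OF \<open>r > 0\<close> conv] unfolding \<rho>_def by blast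
  define M where "M k = B / \<rho> * dps_majorant k" for k
  have M: "M summable_on UNIV"
    unfolding M_def by (intro summable_on_cmult_right summable_on_dps_majorant)
  note bound = norm_dps_deriv_terms_le[OF \<open>\<rho> > 0\<close> B, folded M_def]
  have z': "z \<in> ball p (\<rho> / 2)"
    using z by (simp add: \<rho>_def)
  have "dps_dx_term c p z summable_on UNIV" and "dps_dy_term c p z summable_on UNIV"
    using Infinite_Sum.abs_summable_on_comparison_test'[OF M, of "dps_dx_term c p z"]
      Infinite_Sum.abs_summable_on_comparison_test'[OF M, of "dps_dy_term c p z"] bound[OF z']
    by (blast intro: abs_summable_summable)+
  then have dx: "(dps_term (coeff_dx c) p z has_sum infsum (dps_dx_term c p z) UNIV) UNIV"
    and dy: "(dps_term (coeff_dy c) p z has_sum infsum (dps_dy_term c p z) UNIV) UNIV"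
    by (simp_all flip: has_sum_dps_dx_term_iff has_sum_dps_dy_term_iff)
  then show "(dps_term (coeff_dx c) p z has_sum dps (coeff_dx c) p z) UNIV"
    and "(dps_term (coeff_dy c) p z has_sum dps (coeff_dy c) p z) UNIV"
    by (simp_all add: dps_def infsumI)
  have "(f has_derivative (\<lambda>h. Re h *\<^sub>R infsum (dps_dx_term c p z) UNIV
      + Im h *\<^sub>R infsum (dps_dy_term c p z) UNIV)) (at z)"
  proof (rule has_derivative_infsum_partials[OF convex_ball open_ball z' has_derivative_dps_term _ _ M])
    show "((\<lambda>k. dps_term c p \<zeta> k) has_sum f \<zeta>) UNIV" if "\<zeta> \<in> ball p (\<rho> / 2)" for \<zeta>
      using that conv \<open>r > 0\<close> by (auto simp: \<rho>_def)
  qed (use bound in auto)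
  then show "(f has_derivative (\<lambda>h. Re h *\<^sub>R dps (coeff_dx c) p z + Im h *\<^sub>R dps (coeff_dy c) p z)) (at z)"
    using dx dy by (simp add: dps_def infsumI)
qed

lemma real_analytic_on_partials:
  assumes "real_analytic_on \<phi> U" and "z \<in> U"
  defines "S \<equiv> \<lambda>\<zeta>. frechet_derivative \<phi> (at \<zeta>) 1" and "T \<equiv> \<lambda>\<zeta>. frechet_derivative \<phi> (at \<zeta>) \<i>"
  shows "\<phi> differentiable (at z)" and "S differentiable (at z)" and "T differentiable (at z)"
    and "frechet_derivative S (at z) \<i> = frechet_derivative T (at z) 1"
proof -
  obtain r c where "r > 0" and conv: "\<forall>\<zeta>\<in>ball z r. (dps_term c z \<zeta> has_sum \<phi> \<zeta>) UNIV"
    using assms(1,2) unfolding real_analytic_on_def dps_term_def by blast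
  define r' where "r' = r / 4"
  have "r' > 0" and "z \<in> ball z r'" and "z \<in> ball z (r' / 4)"
    using \<open>r > 0\<close> by (simp_all add: r'_def)
  have dx: "\<forall>\<zeta>\<in>ball z r'. (dps_term (coeff_dx c) z \<zeta> has_sum dps (coeff_dx c) z \<zeta>) UNIV"
    and dy: "\<forall>\<zeta>\<in>ball z r'. (dps_term (coeff_dy c) z \<zeta> has_sum dps (coeff_dy c) z \<zeta>) UNIV"
    and D\<phi>: "\<forall>\<zeta>\<in>ball z r'.
      (\<phi> has_derivative (\<lambda>h. Re h *\<^sub>R dps (coeff_dx c) z \<zeta> + Im h *\<^sub>R dps (coeff_dy c) z \<zeta>)) (at \<zeta>)"
    unfolding r'_def using has_derivative_dps[OF \<open>r > 0\<close> conv] by blast+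
  have S: "S \<zeta> = dps (coeff_dx c) z \<zeta>" and T: "T \<zeta> = dps (coeff_dy c) z \<zeta>" if "\<zeta> \<in> ball z r'" for \<zeta>
    using frechet_derivative_at[OF D\<phi>[rule_format, OF that], symmetric] by (simp_all add: S_def T_def)
  have DS: "(S has_derivative
      (\<lambda>h. Re h *\<^sub>R dps (coeff_dx (coeff_dx c)) z z + Im h *\<^sub>R dps (coeff_dy (coeff_dx c)) z z)) (at z)"
    using has_derivative_dps(3)[OF \<open>r' > 0\<close> dx \<open>z \<in> ball z (r' / 4)\<close>]
    by (rule has_derivative_transform_within_open[OF _ open_ball \<open>z \<in> ball z r'\<close>]) (simp add: S)
  have DT: "(T has_derivative
      (\<lambda>h. Re h *\<^sub>R dps (coeff_dx (coeff_dy c)) z z + Im h *\<^sub>R dps (coeff_dy (coeff_dy c)) z z)) (at z)"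
    using has_derivative_dps(3)[OF \<open>r' > 0\<close> dy \<open>z \<in> ball z (r' / 4)\<close>]
    by (rule has_derivative_transform_within_open[OF _ open_ball \<open>z \<in> ball z r'\<close>]) (simp add: T)
  show "S differentiable (at z)" and "T differentiable (at z)"
    using DS DT by (auto simp: differentiable_def)
  show "frechet_derivative S (at z) \<i> = frechet_derivative T (at z) 1"
    using frechet_derivative_at[OF DS, symmetric] frechet_derivative_at[OF DT, symmetric]
    by (simp add: coeff_dx_dy_commute)
  show "\<phi> differentiable (at z)"
    using D\<phi> \<open>z \<in> ball z r'\<close> by (auto simp: differentiable_def)
qed

lemma has_derivative_complex_partials:
  fixes f :: "complex \<Rightarrow> 'a::real_normed_vector"
  assumes "f differentiable (at z)"
  shows "(f has_derivative
    (\<lambda>h. Re h *\<^sub>R frechet_derivative f (at z) 1 + Im h *\<^sub>R frechet_derivative f (at z) \<i>)) (at z)"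
proof -
  let ?D = "frechet_derivative f (at z)"
  have "linear ?D"
    using assms by (rule linear_frechet_derivative)
  have decompose: "?D h = Re h *\<^sub>R ?D 1 + Im h *\<^sub>R ?D \<i>" for h
  proof -
    have "h = Re h *\<^sub>R 1 + Im h *\<^sub>R \<i>"
      by (simp add: complex_eq_iff)
    then have "?D h = ?D (Re h *\<^sub>R 1 + Im h *\<^sub>R \<i>)"
      by (rule arg_cong)
    also have "\<dots> = Re h *\<^sub>R ?D 1 + Im h *\<^sub>R ?D \<i>"
      using \<open>linear ?D\<close> by (simp add: linear_add linear_scale)
    finally show ?thesis .
  qed
  show ?thesis
    using assms[unfolded frechet_derivative_works]
    by (rule has_derivative_eq_rhs) (rule ext, rule decompose)
qed

lemma inner_has_derivative_eq_0_of_norm_eq_1: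
  fixes f :: "'a::real_normed_vector \<Rightarrow> 'b::real_inner"
  assumes "open U" "z \<in> U" and unit: "\<And>\<zeta>. \<zeta> \<in> U \<Longrightarrow> norm (f \<zeta>) = 1"
    and "(f has_derivative f') (at z)"
  shows "f z \<bullet> f' h = 0"
proof -
  have "((\<lambda>\<zeta>. f \<zeta> \<bullet> f \<zeta>) has_derivative (\<lambda>h. f z \<bullet> f' h + f' h \<bullet> f z)) (at z)"
    using assms(4) assms(4) by (rule has_derivative_inner)
  moreover have "((\<lambda>\<zeta>. f \<zeta> \<bullet> f \<zeta>) has_derivative (\<lambda>h. 0)) (at z)"
    using has_derivative_const assms(1,2)
  proof (rule has_derivative_transform_within_open)
    show "1 = f \<zeta> \<bullet> f \<zeta>" if "\<zeta> \<in> U" for \<zeta>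
      using unit[OF that] by (metis power2_norm_eq_inner power_one)
  qed
  ultimately have "(\<lambda>h. f z \<bullet> f' h + f' h \<bullet> f z) = (\<lambda>h. 0)"
    by (rule has_derivative_unique)
  then have "f z \<bullet> f' h + f' h \<bullet> f z = 0"
    by (rule fun_cong)
  then show ?thesis
    by (simp add: inner_commute)
qed

lemma has_derivative_ruled:
  fixes \<phi> \<psi> :: "'a::real_normed_vector \<Rightarrow> 'b::real_normed_vector"
  assumes "(\<phi> has_derivative D\<phi>) (at z)" and "(\<psi> has_derivative D\<psi>) (at z)"
  shows "((\<lambda>(r, z). r *\<^sub>R \<phi> z + \<psi> z) has_derivative
    (\<lambda>(a, h). a *\<^sub>R \<phi> z + r *\<^sub>R D\<phi> h + D\<psi> h)) (at (r, z))"
proof -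
  have fst: "(fst has_derivative fst) (at (r, z))" and snd: "(snd has_derivative snd) (at (r, z))"
    by (auto intro: bounded_linear_fst bounded_linear_snd bounded_linear.has_derivative
        has_derivative_ident)
  have "(\<phi> has_derivative D\<phi>) (at (snd (r, z)))" and "(\<psi> has_derivative D\<psi>) (at (snd (r, z)))"
    using assms by simp_all
  from this[THEN has_derivative_compose[OF snd]]
  have "((\<lambda>x. fst x *\<^sub>R \<phi> (snd x) + \<psi> (snd x)) has_derivative
      (\<lambda>v. fst (r, z) *\<^sub>R D\<phi> (snd v) + fst v *\<^sub>R \<phi> (snd (r, z)) + D\<psi> (snd v))) (at (r, z))"
    by (intro has_derivative_add has_derivative_scaleR fst)
  then show ?thesis
    by (simp add: case_prod_beta' add_ac)
qed

lemma associative_paramD: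
  assumes "associative_param F S" and "x \<in> S" and "(F has_derivative D) (at x)"
  shows "G2phi (D (1, 0)) (D (0, 1)) (D (0, \<i>)) = vol3 (D (1, 0)) (D (0, 1)) (D (0, \<i>))"
  using assms by (auto simp: associative_param_def dest: frechet_derivative_at)

lemma associative_paramI:
  assumes "\<And>x. x \<in> S \<Longrightarrow> \<exists>D. (F has_derivative D) (at x)
    \<and> G2phi (D (1, 0)) (D (0, 1)) (D (0, \<i>)) = vol3 (D (1, 0)) (D (0, 1)) (D (0, \<i>))"
  shows "associative_param F S"
  unfolding associative_param_def
  by (metis assms differentiableI frechet_derivative_at)

lemma associative_cone_imp_J_holomorphic:
  assumes U: "open U" "z \<in> U" and unit: "\<And>\<zeta>. \<zeta> \<in> U \<Longrightarrow> norm (\<phi> \<zeta>) = 1"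
    and D\<phi>: "\<And>\<zeta>. \<zeta> \<in> U \<Longrightarrow> (\<phi> has_derivative (\<lambda>h. Re h *\<^sub>R S \<zeta> + Im h *\<^sub>R T \<zeta>)) (at \<zeta>)"
    and conformal: "S z \<bullet> T z = 0" "norm (S z) = norm (T z)"
    and cone: "associative_param (\<lambda>(r, z). r *\<^sub>R \<phi> z) (UNIV \<times> U)"
  shows "T z = cross7 (\<phi> z) (S z)"
proof (rule calibrated_frame_eq_cross7)
  show "\<phi> z \<bullet> \<phi> z = 1"
    using unit[OF U(2)] by (metis power2_norm_eq_inner power_one)
  show "\<phi> z \<bullet> S z = 0" and "\<phi> z \<bullet> T z = 0"
    using inner_has_derivative_eq_0_of_norm_eq_1[OF U unit D\<phi>[OF U(2)], of 1]
      inner_has_derivative_eq_0_of_norm_eq_1[OF U unit D\<phi>[OF U(2)], of \<i>]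
    by simp_all
  have "((\<lambda>(r, z). r *\<^sub>R \<phi> z) has_derivative
      (\<lambda>(a, h). a *\<^sub>R \<phi> z + (Re h *\<^sub>R S z + Im h *\<^sub>R T z))) (at (1, z))"
    using has_derivative_ruled[OF D\<phi>[OF U(2)] has_derivative_const[of 0], of 1] by simp
  from associative_paramD[OF cone _ this]
  show "G2phi (\<phi> z) (S z) (T z) = vol3 (\<phi> z) (S z) (T z)"
    using U(2) by simp
qed (use conformal in auto)

lemma has_derivative_lie_deriv:
  fixes \<phi> :: "complex \<Rightarrow> real^7"
  assumes U: "open U" "z \<in> U"
    and D\<phi>: "\<And>\<zeta>. \<zeta> \<in> U \<Longrightarrow> (\<phi> has_derivative (\<lambda>h. Re h *\<^sub>R S \<zeta> + Im h *\<^sub>R T \<zeta>)) (at \<zeta>)"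
    and DS: "(S has_derivative S') (at z)" and DT: "(T has_derivative T') (at z)"
    and holo: "w holomorphic_on U"
  shows "(lie_deriv w \<phi> has_derivative (\<lambda>h. (Re (w z) *\<^sub>R S' h + Re (deriv w z * h) *\<^sub>R S z)
    + (Im (w z) *\<^sub>R T' h + Im (deriv w z * h) *\<^sub>R T z))) (at z)"
proof -
  have "(w has_derivative (\<lambda>h. deriv w z * h)) (at z)"
    using holomorphic_derivI[OF holo U] by (simp add: has_field_derivative_def)
  then have "((\<lambda>\<zeta>. Re (w \<zeta>) *\<^sub>R S \<zeta> + Im (w \<zeta>) *\<^sub>R T \<zeta>) has_derivative
      (\<lambda>h. (Re (w z) *\<^sub>R S' h + Re (deriv w z * h) *\<^sub>R S z)
        + (Im (w z) *\<^sub>R T' h + Im (deriv w z * h) *\<^sub>R T z))) (at z)"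
    by (intro has_derivative_add has_derivative_scaleR has_derivative_Re has_derivative_Im DS DT)
  then show ?thesis
  proof (rule has_derivative_transform_within_open[OF _ U])
    show "Re (w \<zeta>) *\<^sub>R S \<zeta> + Im (w \<zeta>) *\<^sub>R T \<zeta> = lie_deriv w \<phi> \<zeta>" if "\<zeta> \<in> U" for \<zeta>
      using frechet_derivative_at[OF D\<phi>[OF that], symmetric] by (simp add: lie_deriv_def)
  qed
qed

lemma has_derivative_J_holomorphic:
  assumes U: "open U" "z \<in> U" and J: "\<And>\<zeta>. \<zeta> \<in> U \<Longrightarrow> T \<zeta> = cross7 (\<phi> \<zeta>) (S \<zeta>)"
    and D\<phi>: "(\<phi> has_derivative D\<phi>) (at z)" and DS: "(S has_derivative S') (at z)"
    and DT: "(T has_derivative T') (at z)"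
  shows "T' h = cross7 (\<phi> z) (S' h) + cross7 (D\<phi> h) (S z)"
proof -
  have "((\<lambda>\<zeta>. cross7 (\<phi> \<zeta>) (S \<zeta>)) has_derivative
      (\<lambda>h. cross7 (\<phi> z) (S' h) + cross7 (D\<phi> h) (S z))) (at z)"
    using bounded_bilinear_cross7 D\<phi> DS by (rule bounded_bilinear.FDERIV)
  then have "(T has_derivative (\<lambda>h. cross7 (\<phi> z) (S' h) + cross7 (D\<phi> h) (S z))) (at z)"
    by (rule has_derivative_transform_within_open[OF _ U]) (simp add: J)
  with DT have "T' = (\<lambda>h. cross7 (\<phi> z) (S' h) + cross7 (D\<phi> h) (S z))"
    by (rule has_derivative_unique)
  then show ?thesis
    by simp
qed

lemma J_holomorphic_second_derivatives:
  assumes U: "open U" "z \<in> U" and unit: "\<And>\<zeta>. \<zeta> \<in> U \<Longrightarrow> norm (\<phi> \<zeta>) = 1"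
    and D\<phi>: "\<And>\<zeta>. \<zeta> \<in> U \<Longrightarrow> (\<phi> has_derivative (\<lambda>h. Re h *\<^sub>R S \<zeta> + Im h *\<^sub>R T \<zeta>)) (at \<zeta>)"
    and DS: "(S has_derivative S') (at z)" and DT: "(T has_derivative T') (at z)"
    and mixed: "S' \<i> = T' 1" and J: "\<And>\<zeta>. \<zeta> \<in> U \<Longrightarrow> T \<zeta> = cross7 (\<phi> \<zeta>) (S \<zeta>)"
  shows "T' 1 = cross7 (\<phi> z) (S' 1)"
    and "T' \<i> = cross7 (\<phi> z) (T' 1) - (S z \<bullet> S z) *\<^sub>R \<phi> z"
proof -
  note T' = has_derivative_J_holomorphic[OF U J D\<phi>[OF U(2)] DS DT]
  show "T' 1 = cross7 (\<phi> z) (S' 1)"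
    using T'[of 1] by simp
  have "\<phi> z \<bullet> S z = 0"
    using inner_has_derivative_eq_0_of_norm_eq_1[OF U unit D\<phi>[OF U(2)], of 1] by simp
  then have "cross7 (T z) (S z) = - (S z \<bullet> S z) *\<^sub>R \<phi> z"
    using J[OF U(2)] by (simp add: cross7_cross7_self_right)
  then show "T' \<i> = cross7 (\<phi> z) (T' 1) - (S z \<bullet> S z) *\<^sub>R \<phi> z"
    using T'[of \<i>] mixed by simp
qed

lemma ruled_associative_of_J_holomorphic:
  assumes U: "open U" and unit: "\<And>z. z \<in> U \<Longrightarrow> norm (\<phi> z) = 1"
    and D\<phi>: "\<And>z. z \<in> U \<Longrightarrow> (\<phi> has_derivative (\<lambda>h. Re h *\<^sub>R S z + Im h *\<^sub>R T z)) (at z)"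
    and DS: "\<And>z. z \<in> U \<Longrightarrow> (S has_derivative S' z) (at z)"
    and DT: "\<And>z. z \<in> U \<Longrightarrow> (T has_derivative T' z) (at z)"
    and mixed: "\<And>z. z \<in> U \<Longrightarrow> S' z \<i> = T' z 1"
    and J: "\<And>z. z \<in> U \<Longrightarrow> T z = cross7 (\<phi> z) (S z)"
    and holo: "w holomorphic_on U"
  shows "associative_param (\<lambda>(r, z). r *\<^sub>R \<phi> z + lie_deriv w \<phi> z) (UNIV \<times> U)"
proof (rule associative_paramI)
  fix x :: "real \<times> complex"
  assume "x \<in> UNIV \<times> U"
  then obtain r z where x: "x = (r, z)" and z: "z \<in> U"
    by auto
  define u where "u = \<phi> z"
  define D where "D = (\<lambda>(a, h). a *\<^sub>R u + r *\<^sub>R (Re h *\<^sub>R S z + Im h *\<^sub>R T z)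
    + ((Re (w z) *\<^sub>R S' z h + Re (deriv w z * h) *\<^sub>R S z)
      + (Im (w z) *\<^sub>R T' z h + Im (deriv w z * h) *\<^sub>R T z)))"
  have deriv: "((\<lambda>(r, z). r *\<^sub>R \<phi> z + lie_deriv w \<phi> z) has_derivative D) (at x)"
    unfolding x D_def u_def
    using D\<phi>[OF z] has_derivative_lie_deriv[OF U z D\<phi> DS[OF z] DT[OF z] holo]
    by (rule has_derivative_ruled)
  have uu: "u \<bullet> u = 1"
    using unit[OF z] by (metis power2_norm_eq_inner power_one u_def)
  have D_i: "D (0, \<i>) = cross7 u (D (0, 1)) + (- Im (w z) * (S z \<bullet> S z)) *\<^sub>R u"
  proof -
    note T' = J_holomorphic_second_derivatives[OF U z unit D\<phi> DS[OF z] DT[OF z] mixed[OF z] J]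
    have "u \<bullet> S z = 0"
      using inner_has_derivative_eq_0_of_norm_eq_1[OF U z unit D\<phi>[OF z], of 1] by (simp add: u_def)
    moreover have cross_S: "cross7 u (S z) = T z"
      using J[OF z] by (simp add: u_def)
    ultimately have "cross7 u (T z) = - S z"
      using cross7_cross7_unit[OF uu] by metis
    then show ?thesis
      by (simp add: D_def T'[folded u_def] cross7_add_right cross7_scaleR_right cross_S mixed[OF z]
          algebra_simps)
  qed
  have D_r: "D (1, 0) = u"
    using has_derivative_linear[OF DS[OF z]] has_derivative_linear[OF DT[OF z]]
    by (simp add: D_def linear_0)
  have "G2phi (D (1, 0)) (D (0, 1)) (D (0, \<i>)) = vol3 (D (1, 0)) (D (0, 1)) (D (0, \<i>))"
    unfolding D_r D_i by (rule G2phi_cross7_eq_vol3[OF uu])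
  with deriv show "\<exists>D. ((\<lambda>(r, z). r *\<^sub>R \<phi> z + lie_deriv w \<phi> z) has_derivative D) (at x)
    \<and> G2phi (D (1, 0)) (D (0, 1)) (D (0, \<i>)) = vol3 (D (1, 0)) (D (0, 1)) (D (0, \<i>))"
    by blast
qed

theorem proposition6p8:
  fixes \<phi> :: "complex \<Rightarrow> real^7" and w :: "complex \<Rightarrow> complex" and U :: "complex set"
  assumes U_open: "open U"
    and analytic: "real_analytic_on \<phi> U"
    and sphere: "\<forall>z\<in>U. norm (\<phi> z) = 1"
    and conformal: "\<forall>z\<in>U. frechet_derivative \<phi> (at z) 1 \<bullet> frechet_derivative \<phi> (at z) \<i> = 0
                        \<and> norm (frechet_derivative \<phi> (at z) 1) = norm (frechet_derivative \<phi> (at z) \<i>)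
                        \<and> frechet_derivative \<phi> (at z) 1 \<noteq> 0"
    and oriented: "\<forall>z\<in>U. G2phi (\<phi> z) (frechet_derivative \<phi> (at z) 1) (frechet_derivative \<phi> (at z) \<i>) > 0"
    and cone_assoc: "associative_param (\<lambda>(r, z). r *\<^sub>R \<phi> z) (UNIV \<times> U)"
    and holo: "w holomorphic_on U"
  shows "associative_param (\<lambda>(r, z). r *\<^sub>R \<phi> z + lie_deriv w \<phi> z) (UNIV \<times> U)
       \<and> asymptotic_cone \<phi> (lie_deriv w \<phi>) U = ruled_set \<phi> (\<lambda>_. 0) U"
proof
  define S where "S z = frechet_derivative \<phi> (at z) 1" for z
  define T where "T z = frechet_derivative \<phi> (at z) \<i>" for z
  note partials = real_analytic_on_partials[OF analytic, folded S_def[abs_def] T_def[abs_def]]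
  have D\<phi>: "(\<phi> has_derivative (\<lambda>h. Re h *\<^sub>R S z + Im h *\<^sub>R T z)) (at z)" if "z \<in> U" for z
    unfolding S_def T_def using partials(1)[OF that] by (rule has_derivative_complex_partials)
  have J: "T z = cross7 (\<phi> z) (S z)" if "z \<in> U" for z
    using associative_cone_imp_J_holomorphic[OF U_open that _ D\<phi> _ _ cone_assoc] sphere conformal that
    by (simp add: S_def T_def)
  show "associative_param (\<lambda>(r, z). r *\<^sub>R \<phi> z + lie_deriv w \<phi> z) (UNIV \<times> U)"
    using U_open sphere D\<phi> partials(2-4) J holo frechet_derivative_works
    by (intro ruled_associative_of_J_holomorphic[where S' = "\<lambda>z. frechet_derivative S (at z)"
          and T' = "\<lambda>z. frechet_derivative T (at z)"]) blast+
  show "asymptotic_cone \<phi> (lie_deriv w \<phi>) U = ruled_set \<phi> (\<lambda>_. 0) U"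
    by (simp add: asymptotic_cone_def ruled_set_def)
qed

end
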